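(* Let $p>2$ be a prime and $d\geq 2$ an integer with $p-1=df$. Let $\omega$ be a fixed generator of $\mathbb{F}_p^*$, and for $i,j\in\mathbb{Z}/d\mathbb{Z}$ let $(i,j)=\#\{(u,v):0\leq u,v\leq f-1,\ 1+\omega^{du+i}\equiv\omega^{dv+j}\pmod p\}$. Let $\theta=0$ if $f$ is even and $\theta=d/2$ if $f$ is odd. Define the $d\times d$ matrix $M=(m_{ij})_{0\leq i,j\leq d-1}$ by $m_{ij}=0$ if $(i,j)=0$ and $m_{ij}=1$ otherwise, and write $M^n=(m^{(n)}_{ij})$. Then \[ g_d(p)=\max_{0\leq\alpha\leq d-1}\min\{s\mid m^{(s-1)}_{(\alpha+\theta)\,\theta}\neq0\}. \]
   Context: For $a\in\mathbb{F}_p^*$, $s_d(p,a)=\min\{k\mid a=\sum_{i=1}^k a_i^d,\ a_i\in\mathbb{F}_p^*\}$, and $g_d(p)=\max_{a\in\mathbb{F}_p^*}s_d(p,a)$. The index $\alpha+\theta$ is taken modulo $d$, and $M^0$ is the identity matrix. *)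

theory Defs
  imports "HOL-Number_Theory.Number_Theory"
begin

definition s_d :: "nat \<Rightarrow> nat \<Rightarrow> int \<Rightarrow> nat" where
  "s_d d p a = (LEAST k. \<exists>x :: nat \<Rightarrow> int.
       (\<forall>i<k. \<not> int p dvd x i) \<and> [a = (\<Sum>i<k. x i ^ d)] (mod int p))"

definition g_d :: "nat \<Rightarrow> nat \<Rightarrow> nat" where
  "g_d d p = Max (s_d d p ` {1..int p - 1})"

(* cyclotomic number (i,j) of order d w.r.t. generator w, with p - 1 = d f;
   i, j in {0..d-1} represent Z/dZ *)
definition cyc :: "nat \<Rightarrow> nat \<Rightarrow> nat \<Rightarrow> nat \<Rightarrow> nat \<Rightarrow> nat \<Rightarrow> nat" where
  "cyc p d f w i j = card {(u, v). u < f \<and> v < f \<and>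
       [1 + w ^ (d * u + i) = w ^ (d * v + j)] (mod p)}"

fun mpow :: "nat \<Rightarrow> (nat \<Rightarrow> nat \<Rightarrow> nat) \<Rightarrow> nat \<Rightarrow> nat \<Rightarrow> nat \<Rightarrow> nat" where
  "mpow d M 0 = (\<lambda>i j. if i = j then 1 else 0)"
| "mpow d M (Suc n) = (\<lambda>i j. \<Sum>k<d. mpow d M n i k * M k j)"

end

(*
  Let C_i = w^i D be the cyclotomic classes, where D is the group of nonzero d-th powers mod p.
  Multiplying by a nonzero d-th power permutes the sums of k nonzero d-th powers, so s_d(p,a) only
  depends on the class of a. After scaling by z^(-d), an element of C_j has the form b + z^d with
  b in C_i exactly when 1 + x lies in C_j for some x in C_i, i.e. when the cyclotomic number (i,j)
  is nonzero. Hence a in C_alpha is a sum of s nonzero d-th powers iff M has a walk of length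
  s - 1 from 0 to alpha (a vanishing partial sum only shortens the walk). Finally x |-> -(1 + x),
  together with -1 in C_theta, shows that m_ij <> 0 implies m_(j+theta)(i+theta) <> 0, which turns
  walks from 0 to alpha into walks from alpha + theta to theta.
*)

theory Submission
  imports Defs
begin

section \<open>Nonzero patterns of matrix powers\<close>

lemma mpow_Suc_nonzero_iff:
  "mpow d M (Suc n) i j \<noteq> 0 \<longleftrightarrow> (\<exists>k<d. mpow d M n i k \<noteq> 0 \<and> M k j \<noteq> 0)"
  by auto

lemma mpow_Suc_left:
  assumes "i < d" "j < d"
  shows "mpow d M (Suc n) i j = (\<Sum>k<d. M i k * mpow d M n k j)"
  using assms(2)
proof (induction n arbitrary: j)
  case 0
  with assms(1) show ?case by (simp add: of_bool_def[symmetric])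
next
  case (Suc n)
  have "mpow d M (Suc (Suc n)) i j = (\<Sum>l<d. (\<Sum>k<d. M i k * mpow d M n k l) * M l j)"
    by (simp add: Suc.IH[symmetric])
  also have "\<dots> = (\<Sum>l<d. \<Sum>k<d. M i k * (mpow d M n k l * M l j))"
    by (simp add: sum_distrib_right mult.assoc)
  also have "\<dots> = (\<Sum>k<d. M i k * (\<Sum>l<d. mpow d M n k l * M l j))"
    by (subst sum.swap) (simp add: sum_distrib_left)
  finally show ?case by simp
qed

lemma mpow_Suc_nonzero_iff_left:
  assumes "i < d" "j < d"
  shows "mpow d M (Suc n) i j \<noteq> 0 \<longleftrightarrow> (\<exists>k<d. M i k \<noteq> 0 \<and> mpow d M n k j \<noteq> 0)"
  unfolding mpow_Suc_left[OF assms] by auto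

lemma mpow_nonzero_reverse:
  assumes \<sigma>: "\<And>a. a < d \<Longrightarrow> \<sigma> a < d"
    and anti: "\<And>a b. a < d \<Longrightarrow> b < d \<Longrightarrow> M a b \<noteq> 0 \<Longrightarrow> M (\<sigma> b) (\<sigma> a) \<noteq> 0"
    and "i < d" "j < d" "mpow d M n i j \<noteq> 0"
  shows "mpow d M n (\<sigma> j) (\<sigma> i) \<noteq> 0"
  using assms(4,5)
proof (induction n arbitrary: j)
  case 0
  then show ?case by (simp split: if_splits)
next
  case (Suc n)
  then obtain k where k: "k < d" "mpow d M n i k \<noteq> 0" "M k j \<noteq> 0"
    by (auto simp only: mpow_Suc_nonzero_iff)
  have "mpow d M n (\<sigma> k) (\<sigma> i) \<noteq> 0" using Suc.IH k by blast
  moreover have "M (\<sigma> j) (\<sigma> k) \<noteq> 0" using anti k Suc.prems by blast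
  ultimately show ?case
    using mpow_Suc_nonzero_iff_left[OF \<sigma>[OF Suc.prems(1)] \<sigma>[OF assms(3)]] \<sigma>[OF k(1)] by blast
qed

section \<open>Sums of nonzero \<open>d\<close>-th powers\<close>

lemma Least_eq_Least_if_dominated:
  fixes P Q :: "nat \<Rightarrow> bool"
  assumes "P k" and P_Q: "\<And>k. P k \<Longrightarrow> \<exists>s\<le>k. Q s" and Q_P: "\<And>s. Q s \<Longrightarrow> P s"
  shows "(LEAST k. P k) = (LEAST s. Q s)"
proof -
  obtain s where s: "s \<le> (LEAST k. P k)" "Q s"
    using P_Q LeastI[of P, OF \<open>P k\<close>] by blast
  then have "(LEAST s. Q s) \<le> (LEAST k. P k)"
    using Least_le[of Q s] by linarith
  moreover have "P (LEAST s. Q s)"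
    using Q_P LeastI[of Q, OF \<open>Q s\<close>] by blast
  then have "(LEAST k. P k) \<le> (LEAST s. Q s)"
    by (rule Least_le)
  ultimately show ?thesis by simp
qed

definition is_sum_of_powers :: "nat \<Rightarrow> nat \<Rightarrow> nat \<Rightarrow> int \<Rightarrow> bool" where
  "is_sum_of_powers d p k a \<longleftrightarrow>
     (\<exists>x :: nat \<Rightarrow> int. (\<forall>i<k. \<not> int p dvd x i) \<and> [a = (\<Sum>i<k. x i ^ d)] (mod int p))"

lemma s_d_eq_Least: "s_d d p a = (LEAST k. is_sum_of_powers d p k a)"
  by (simp add: s_d_def is_sum_of_powers_def)

lemma is_sum_of_powers_0: "is_sum_of_powers d p 0 a \<longleftrightarrow> [a = 0] (mod int p)"
  by (simp add: is_sum_of_powers_def)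

lemma is_sum_of_powers_Suc:
  "is_sum_of_powers d p (Suc k) a \<longleftrightarrow>
     (\<exists>b z. \<not> int p dvd z \<and> is_sum_of_powers d p k b \<and> [a = b + z ^ d] (mod int p))"
proof
  assume "is_sum_of_powers d p (Suc k) a"
  then obtain x where x: "\<forall>i<Suc k. \<not> int p dvd x i"
    and a: "[a = (\<Sum>i<k. x i ^ d) + x k ^ d] (mod int p)"
    by (auto simp: is_sum_of_powers_def)
  have "is_sum_of_powers d p k (\<Sum>i<k. x i ^ d)"
    unfolding is_sum_of_powers_def using x by (intro exI[of _ x]) auto
  moreover have "\<not> int p dvd x k"
    using x by simp
  ultimately show "\<exists>b z. \<not> int p dvd z \<and> is_sum_of_powers d p k b \<and> [a = b + z ^ d] (mod int p)"
    using a by blast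
next
  assume "\<exists>b z. \<not> int p dvd z \<and> is_sum_of_powers d p k b \<and> [a = b + z ^ d] (mod int p)"
  then obtain b z x where z: "\<not> int p dvd z" and x: "\<forall>i<k. \<not> int p dvd x i"
    and a: "[a = b + z ^ d] (mod int p)" and b: "[b = (\<Sum>i<k. x i ^ d)] (mod int p)"
    by (auto simp: is_sum_of_powers_def)
  have "[a = (\<Sum>i<Suc k. (x(k := z)) i ^ d)] (mod int p)"
    using cong_trans[OF a cong_add[OF b cong_refl]] by simp
  moreover have "\<forall>i<Suc k. \<not> int p dvd (x(k := z)) i"
    using x z by (simp add: less_Suc_eq)
  ultimately show "is_sum_of_powers d p (Suc k) a"
    unfolding is_sum_of_powers_def by blast
qed

lemma is_sum_of_powers_ones:
  assumes "p \<noteq> 1" "0 \<le> a"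
  shows "is_sum_of_powers d p (nat a) a"
  unfolding is_sum_of_powers_def using assms by (intro exI[of _ "\<lambda>_. 1"]) auto

section \<open>Cyclotomic classes\<close>

locale cyclotomic =
  fixes p d f w :: nat
  assumes prime_p: "prime p" and p_gt_2: "p > 2" and d_pos: "d > 0"
    and p_minus_1_eq: "p - 1 = d * f" and primroot: "residue_primroot p w"
begin

abbreviation P :: int where "P \<equiv> int p"

lemma prime_P: "prime P"
  using prime_p by simp

lemma P_dvd_mult_iff [simp]: "P dvd x * y \<longleftrightarrow> P dvd x \<or> P dvd y"
  using prime_P by (rule prime_dvd_mult_iff)

lemma P_dvd_minus_one [simp]: "\<not> P dvd -1" and P_dvd_one [simp]: "\<not> P dvd 1"
  using prime_p by auto

lemma P_dvd_power_iff [simp]: "P dvd x ^ n \<longleftrightarrow> P dvd x \<and> n > 0"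
  using prime_dvd_power_iff[OF prime_P, of n x] P_dvd_one by (cases "n = 0") auto

lemma not_P_dvd_w: "\<not> P dvd int w"
proof
  assume "P dvd int w"
  then have "p dvd w" by simp
  moreover have "coprime p w"
    using primroot by (simp add: residue_primroot_def)
  ultimately show False
    using prime_p by (metis coprime_absorb_left not_prime_unit)
qed

lemma power_w_cong_iff: "[int w ^ a = int w ^ b] (mod P) \<longleftrightarrow> [a = b] (mod (p - 1))"
proof -
  have "[int w ^ a = int w ^ b] (mod P) \<longleftrightarrow> [w ^ a = w ^ b] (mod p)"
    by (metis cong_int_iff of_nat_power)
  also have "\<dots> \<longleftrightarrow> [a = b] (mod ord p w)"
    using primroot by (simp add: order_divides_expdiff residue_primroot_def)
  also have "ord p w = p - 1"
    using primroot prime_p by (simp add: residue_primroot_def totient_prime)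
  finally show ?thesis .
qed

lemma ex_power_w_cong:
  assumes "\<not> P dvd x"
  shows "\<exists>e<p - 1. [int w ^ e = x] (mod P)"
proof -
  have "x mod P \<noteq> 0" "0 \<le> x mod P" "x mod P < P"
    using assms prime_gt_0_nat[OF prime_p] by (auto simp: dvd_eq_mod_eq_0)
  then have "nat (x mod P) \<in> totatives p"
    using prime_p by (auto simp: totatives_prime)
  also have "totatives p = (\<lambda>e. w ^ e mod p) ` {..<p - 1}"
    using residue_primroot_is_generator[OF _ primroot] prime_gt_1_nat[OF prime_p]
    by (simp add: bij_betw_def totient_prime prime_p)
  finally obtain e where "e < p - 1" "w ^ e mod p = nat (x mod P)"
    by auto
  then have "int w ^ e mod P = x mod P"
    using \<open>0 \<le> x mod P\<close> by (metis int_nat_eq of_nat_mod of_nat_power)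
  with \<open>e < p - 1\<close> show ?thesis
    unfolding cong_def by blast
qed

definition ind :: "int \<Rightarrow> nat" where
  "ind x = (SOME e. e < p - 1 \<and> [int w ^ e = x] (mod P))"

lemma
  assumes "\<not> P dvd x"
  shows ind_less: "ind x < p - 1" and power_w_ind_cong: "[int w ^ ind x = x] (mod P)"
  using someI_ex[OF ex_power_w_cong[OF assms]] unfolding ind_def by auto

text \<open>\<open>ind\<close> is the discrete logarithm to the base \<open>w\<close>, and \<open>ind_class x = i\<close> says that
  \<open>x\<close> lies in the cyclotomic class \<open>C\<^sub>i\<close>.\<close>

definition ind_class :: "int \<Rightarrow> nat" where
  "ind_class x = ind x mod d"

lemma ind_class_less: "ind_class x < d"
  using d_pos by (simp add: ind_class_def)

lemma ind_class_eqI: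
  assumes "\<not> P dvd x" "[int w ^ e = x] (mod P)"
  shows "ind_class x = e mod d"
proof -
  have "[int w ^ ind x = int w ^ e] (mod P)"
    using power_w_ind_cong[OF assms(1)] assms(2) by (metis cong_sym cong_trans)
  then have "[ind x = e] (mod (p - 1))"
    by (simp add: power_w_cong_iff)
  then have "[ind x = e] (mod d)"
    using p_minus_1_eq by (metis cong_dvd_modulus_nat dvd_triv_left)
  then show ?thesis
    by (simp add: ind_class_def cong_def)
qed

lemma ind_class_one: "ind_class 1 = 0"
  using ind_class_eqI[OF P_dvd_one, of 0] by simp

lemma ind_class_cong:
  assumes "[x = y] (mod P)" "\<not> P dvd y"
  shows "ind_class x = ind_class y"
proof -
  have "\<not> P dvd x"
    using assms cong_dvd_iff by blast
  moreover have "[int w ^ ind y = x] (mod P)"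
    using power_w_ind_cong[OF assms(2)] assms(1) by (metis cong_sym cong_trans)
  ultimately show ?thesis
    using ind_class_eqI by (simp add: ind_class_def)
qed

lemma ind_class_mult:
  assumes "\<not> P dvd x" "\<not> P dvd y"
  shows "ind_class (x * y) = (ind_class x + ind_class y) mod d"
proof -
  have "[int w ^ (ind x + ind y) = x * y] (mod P)"
    using cong_mult[OF power_w_ind_cong[OF assms(1)] power_w_ind_cong[OF assms(2)]]
    by (simp add: power_add)
  then show ?thesis
    using ind_class_eqI assms by (simp add: ind_class_def mod_add_eq)
qed

lemma ind_class_mult_power_d:
  assumes "\<not> P dvd y" "\<not> P dvd z"
  shows "ind_class (y * z ^ d) = ind_class y"
proof -
  have "[int w ^ (ind z * d) = z ^ d] (mod P)"
    using cong_pow[OF power_w_ind_cong[OF assms(2)]] by (simp add: power_mult)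
  then have "ind_class (z ^ d) = 0"
    using ind_class_eqI assms(2) by simp
  then show ?thesis
    using ind_class_mult assms ind_class_less by simp
qed

lemma ind_class_eq_iff:
  assumes "\<not> P dvd x" "\<not> P dvd y"
  shows "ind_class x = ind_class y \<longleftrightarrow> (\<exists>z. \<not> P dvd z \<and> [x = y * z ^ d] (mod P))"
proof
  assume "ind_class x = ind_class y"
  then have "[ind x + (p - 1) = ind y] (mod d)"
    using p_minus_1_eq by (simp add: ind_class_def cong_def)
  moreover have "ind y \<le> ind x + (p - 1)"
    using ind_less[OF assms(2)] by simp
  ultimately obtain c where c: "ind x + (p - 1) = c * d + ind y"
    using cong_le_nat by blast
  have "[y * (int w ^ c) ^ d = int w ^ ind y * int w ^ (c * d)] (mod P)"
    using cong_mult[OF cong_sym[OF power_w_ind_cong[OF assms(2)]] cong_refl[of "(int w ^ c) ^ d"]]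
    by (simp add: power_mult)
  also have "int w ^ ind y * int w ^ (c * d) = int w ^ (ind x + (p - 1))"
    using c by (metis add.commute power_add)
  also have "[int w ^ (ind x + (p - 1)) = int w ^ ind x] (mod P)"
    unfolding power_w_cong_iff by (simp add: cong_def)
  also have "[int w ^ ind x = x] (mod P)"
    using power_w_ind_cong[OF assms(1)] .
  finally show "\<exists>z. \<not> P dvd z \<and> [x = y * z ^ d] (mod P)"
    using not_P_dvd_w by (metis cong_sym P_dvd_power_iff)
next
  assume "\<exists>z. \<not> P dvd z \<and> [x = y * z ^ d] (mod P)"
  then show "ind_class x = ind_class y"
    using assms ind_class_cong ind_class_mult_power_d by auto
qed

definition theta :: nat where
  "theta = (if even f then 0 else d div 2)"

lemma half_p_minus_1_add_half: "(p - 1) div 2 + (p - 1) div 2 = p - 1"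
  using prime_odd_nat[OF prime_p p_gt_2] by (auto elim!: oddE)

lemma half_p_minus_1_mod_d: "(p - 1) div 2 mod d = theta"
proof (cases "even f")
  case True
  then show ?thesis
    using p_minus_1_eq by (auto simp: theta_def elim!: evenE)
next
  case False
  have "even (d * f)"
    using half_p_minus_1_add_half p_minus_1_eq by (metis mult_2 dvd_triv_left)
  then obtain e where e: "d = 2 * e"
    using False by (auto elim!: evenE)
  obtain g where g: "f = 2 * g + 1"
    using False by (auto elim!: oddE)
  have "(p - 1) div 2 = g * d + e"
    using p_minus_1_eq e g by (simp add: algebra_simps)
  then show ?thesis
    unfolding theta_def using False e d_pos by simp
qed

lemma theta_less: "theta < d"
  using d_pos by (simp add: theta_def)

lemma theta_add_theta_mod: "(theta + theta) mod d = 0"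
proof -
  have "(theta + theta) mod d = ((p - 1) div 2 + (p - 1) div 2) mod d"
    unfolding half_p_minus_1_mod_d[symmetric] by (rule mod_add_eq)
  also have "\<dots> = (p - 1) mod d"
    by (simp only: half_p_minus_1_add_half)
  also have "\<dots> = 0"
    unfolding p_minus_1_eq by simp
  finally show ?thesis .
qed

lemma ind_class_minus_one: "ind_class (-1) = theta"
proof -
  define h where "h = int w ^ ((p - 1) div 2)"
  have "h * h = int w ^ (p - 1)"
    unfolding h_def power_add[symmetric] half_p_minus_1_add_half ..
  also have "[int w ^ (p - 1) = int w ^ 0] (mod P)"
    unfolding power_w_cong_iff by (simp add: cong_def)
  finally have "[h * h = 1] (mod P)"
    by simp
  moreover have "h > 0"
    using not_P_dvd_w by (auto simp: h_def intro: gr0I)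
  ultimately have "[h = 1] (mod P) \<or> [h = -1] (mod P)"
    using cong_square[OF prime_P] by blast
  moreover have "\<not> [h = int w ^ 0] (mod P)"
    unfolding h_def power_w_cong_iff using p_gt_2 by (simp add: cong_def)
  ultimately have "[int w ^ ((p - 1) div 2) = -1] (mod P)"
    by (simp add: h_def)
  then show ?thesis
    using ind_class_eqI[OF P_dvd_minus_one] half_p_minus_1_mod_d by metis
qed

lemma ind_class_minus:
  assumes "\<not> P dvd x"
  shows "ind_class (- x) = (ind_class x + theta) mod d"
  using ind_class_mult[OF P_dvd_minus_one assms] by (simp add: ind_class_minus_one add.commute)

lemma ind_class_eq_iff_power_w:
  assumes "i < d" "\<not> P dvd x"
  shows "ind_class x = i \<longleftrightarrow> (\<exists>u<f. [int w ^ (d * u + i) = x] (mod P))"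
proof
  assume "ind_class x = i"
  then have "ind x = d * (ind x div d) + i"
    by (metis ind_class_def mult.commute div_mult_mod_eq)
  moreover have "ind x div d < f"
    using ind_less[OF assms(2)] p_minus_1_eq d_pos by (simp add: div_less_iff_less_mult mult.commute)
  ultimately show "\<exists>u<f. [int w ^ (d * u + i) = x] (mod P)"
    using power_w_ind_cong[OF assms(2)] by metis
next
  assume "\<exists>u<f. [int w ^ (d * u + i) = x] (mod P)"
  then show "ind_class x = i"
    using ind_class_eqI assms by auto
qed

lemma cyc_nonzero_iff:
  "cyc p d f w i j \<noteq> 0 \<longleftrightarrow>
    (\<exists>u<f. \<exists>v<f. [1 + int w ^ (d * u + i) = int w ^ (d * v + j)] (mod P))"
proof -
  have "finite {(u, v). u < f \<and> v < f \<and> [1 + w ^ (d * u + i) = w ^ (d * v + j)] (mod p)}"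
    by (rule finite_subset[of _ "{..<f} \<times> {..<f}"]) auto
  then show ?thesis
    by (auto simp: cyc_def cong_int_iff[symmetric])
qed

definition cyc_matrix :: "nat \<Rightarrow> nat \<Rightarrow> nat" where
  "cyc_matrix = (\<lambda>i j. if cyc p d f w i j = 0 then 0 else 1)"

lemma cyc_matrix_nonzero_iff:
  assumes "i < d" "j < d"
  shows "cyc_matrix i j \<noteq> 0 \<longleftrightarrow>
    (\<exists>x. \<not> P dvd x \<and> \<not> P dvd (1 + x) \<and> ind_class x = i \<and> ind_class (1 + x) = j)"
proof -
  have "cyc_matrix i j \<noteq> 0 \<longleftrightarrow> cyc p d f w i j \<noteq> 0"
    by (simp add: cyc_matrix_def)
  also have "\<dots> \<longleftrightarrow> (\<exists>u<f. \<exists>v<f. [1 + int w ^ (d * u + i) = int w ^ (d * v + j)] (mod P))"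
    by (rule cyc_nonzero_iff)
  also have "\<dots> \<longleftrightarrow>
      (\<exists>x. \<not> P dvd x \<and> \<not> P dvd (1 + x) \<and> ind_class x = i \<and> ind_class (1 + x) = j)"
  proof
    assume "\<exists>u<f. \<exists>v<f. [1 + int w ^ (d * u + i) = int w ^ (d * v + j)] (mod P)"
    then obtain u v where "u < f" "v < f" and uv: "[1 + int w ^ (d * u + i) = int w ^ (d * v + j)] (mod P)"
      by blast
    moreover have "\<not> P dvd 1 + int w ^ (d * u + i)"
      using uv not_P_dvd_w cong_dvd_iff by fastforce
    ultimately show "\<exists>x. \<not> P dvd x \<and> \<not> P dvd (1 + x) \<and> ind_class x = i \<and> ind_class (1 + x) = j"
      using assms not_P_dvd_w ind_class_eq_iff_power_w
      by (intro exI[of _ "int w ^ (d * u + i)"]) (auto intro: cong_sym)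
  next
    assume "\<exists>x. \<not> P dvd x \<and> \<not> P dvd (1 + x) \<and> ind_class x = i \<and> ind_class (1 + x) = j"
    then obtain x u v where "u < f" "v < f" and u: "[int w ^ (d * u + i) = x] (mod P)"
      and v: "[int w ^ (d * v + j) = 1 + x] (mod P)"
      using assms ind_class_eq_iff_power_w by metis
    then show "\<exists>u<f. \<exists>v<f. [1 + int w ^ (d * u + i) = int w ^ (d * v + j)] (mod P)"
      using cong_trans[OF cong_add[OF cong_refl[of 1] u] cong_sym[OF v]] by blast
  qed
  finally show ?thesis .
qed

lemma cyc_matrix_reverse:
  assumes "i < d" "j < d" "cyc_matrix i j \<noteq> 0"
  shows "cyc_matrix ((j + theta) mod d) ((i + theta) mod d) \<noteq> 0"
proof -
  obtain x where x: "\<not> P dvd x" "\<not> P dvd (1 + x)" "ind_class x = i" "ind_class (1 + x) = j"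
    using cyc_matrix_nonzero_iff assms by blast
  define y where "y = - (1 + x)"
  have "1 + y = - x"
    by (simp add: y_def)
  have "\<not> P dvd y" "\<not> P dvd 1 + y"
    using x(1,2) unfolding \<open>1 + y = - x\<close> y_def dvd_minus_iff by simp_all
  moreover have "ind_class y = (j + theta) mod d" "ind_class (1 + y) = (i + theta) mod d"
    using ind_class_minus[OF x(2)] ind_class_minus[OF x(1)] x(3,4)
    unfolding \<open>1 + y = - x\<close> y_def by simp_all
  ultimately show ?thesis
    using cyc_matrix_nonzero_iff d_pos by auto
qed

lemma cyc_matrix_add_power_d:
  assumes "\<not> P dvd b" "\<not> P dvd z" "\<not> P dvd a" "[a = b + z ^ d] (mod P)"
  shows "cyc_matrix (ind_class b) (ind_class a) \<noteq> 0"
proof -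
  have "coprime z P"
    using prime_imp_coprime[OF prime_P assms(2)] by (simp add: coprime_commute)
  then obtain z' where z': "[z * z' = 1] (mod P)"
    using cong_solve_coprime_int by blast
  have "\<not> P dvd z'"
    using cong_dvd_iff[OF z'] P_dvd_one by (metis dvd_mult)
  \<comment> \<open>multiplying by \<open>z'\<^sup>d\<close> turns \<open>b + z\<^sup>d\<close> into \<open>1 + b z'\<^sup>d\<close>\<close>
  define x where "x = b * z' ^ d"
  have "\<not> P dvd x" "ind_class x = ind_class b"
    using assms(1) \<open>\<not> P dvd z'\<close> ind_class_mult_power_d by (simp_all add: x_def)
  have "[(z * z') ^ d = 1] (mod P)"
    using cong_pow[OF z', of d] by simp
  have "[a * z' ^ d = b * z' ^ d + (z * z') ^ d] (mod P)"
    using cong_mult[OF assms(4) cong_refl[of "z' ^ d"]] by (simp add: algebra_simps power_mult_distrib)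
  also have "[b * z' ^ d + (z * z') ^ d = 1 + x] (mod P)"
    using cong_add[OF cong_refl[of "b * z' ^ d"] \<open>[(z * z') ^ d = 1] (mod P)\<close>]
    by (simp add: x_def add.commute)
  finally have "[1 + x = a * z' ^ d] (mod P)"
    by (rule cong_sym)
  moreover have "\<not> P dvd a * z' ^ d"
    using assms(3) \<open>\<not> P dvd z'\<close> by simp
  ultimately have "\<not> P dvd 1 + x" "ind_class (1 + x) = ind_class a"
    using cong_dvd_iff ind_class_cong ind_class_mult_power_d[OF assms(3) \<open>\<not> P dvd z'\<close>] by metis+
  with \<open>\<not> P dvd x\<close> \<open>ind_class x = ind_class b\<close> show ?thesis
    using cyc_matrix_nonzero_iff ind_class_less by metis
qed

lemma cyc_matrix_obtain_add_power_d:
  assumes "i < d" "cyc_matrix i (ind_class a) \<noteq> 0" "\<not> P dvd a"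
  obtains b z where "\<not> P dvd b" "\<not> P dvd z" "ind_class b = i" "[a = b + z ^ d] (mod P)"
proof -
  obtain x where x: "\<not> P dvd x" "\<not> P dvd (1 + x)" "ind_class x = i" "ind_class (1 + x) = ind_class a"
    using cyc_matrix_nonzero_iff assms ind_class_less by blast
  then obtain z where z: "\<not> P dvd z" "[a = (1 + x) * z ^ d] (mod P)"
    using ind_class_eq_iff[OF assms(3) x(2)] by metis
  show ?thesis
  proof
    show "\<not> P dvd x * z ^ d" "ind_class (x * z ^ d) = i"
      using x z ind_class_mult_power_d by auto
    show "[a = x * z ^ d + z ^ d] (mod P)"
      using z(2) by (simp add: algebra_simps)
  qed (rule z(1))
qed

lemma is_sum_of_powers_imp_mpow_nonzero:
  assumes "is_sum_of_powers d p k a" "\<not> P dvd a"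
  shows "\<exists>n<k. mpow d cyc_matrix n 0 (ind_class a) \<noteq> 0"
  using assms
proof (induction k arbitrary: a)
  case 0
  then show ?case
    by (simp add: is_sum_of_powers_0 cong_dvd_iff)
next
  case (Suc k)
  then obtain b z where z: "\<not> P dvd z" and b: "is_sum_of_powers d p k b"
    and a: "[a = b + z ^ d] (mod P)"
    by (auto simp: is_sum_of_powers_Suc)
  show ?case
  proof (cases "P dvd b")
    case True
    \<comment> \<open>the partial sum \<open>b\<close> vanishes, so the walk restarts in class 0\<close>
    then have "[a = 1 * z ^ d] (mod P)"
      using a by (metis cong_add_rcancel_0 cong_0_iff cong_trans mult_1 add.commute)
    then have "ind_class a = 0"
      using ind_class_cong ind_class_mult_power_d[OF P_dvd_one z] ind_class_one z by simp
    then show ?thesis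
      by (intro exI[of _ 0]) simp
  next
    case False
    then obtain n where "n < k" "mpow d cyc_matrix n 0 (ind_class b) \<noteq> 0"
      using Suc.IH b by blast
    moreover have "cyc_matrix (ind_class b) (ind_class a) \<noteq> 0"
      using cyc_matrix_add_power_d False z Suc.prems(2) a by blast
    ultimately have "mpow d cyc_matrix (Suc n) 0 (ind_class a) \<noteq> 0"
      using ind_class_less mpow_Suc_nonzero_iff by blast
    with \<open>n < k\<close> show ?thesis
      by blast
  qed
qed

lemma mpow_nonzero_imp_is_sum_of_powers:
  assumes "mpow d cyc_matrix n 0 (ind_class a) \<noteq> 0" "\<not> P dvd a"
  shows "is_sum_of_powers d p (Suc n) a"
  using assms
proof (induction n arbitrary: a)
  case 0
  then have "ind_class a = ind_class 1"
    by (simp add: ind_class_one split: if_splits)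
  then obtain z where "\<not> P dvd z" "[a = 0 + z ^ d] (mod P)"
    using ind_class_eq_iff[OF 0(2) P_dvd_one] by auto
  moreover have "is_sum_of_powers d p 0 0"
    by (simp add: is_sum_of_powers_0)
  ultimately show ?case
    unfolding is_sum_of_powers_Suc by blast
next
  case (Suc n)
  then obtain k where "k < d" "mpow d cyc_matrix n 0 k \<noteq> 0" "cyc_matrix k (ind_class a) \<noteq> 0"
    by (auto simp only: mpow_Suc_nonzero_iff)
  then obtain b z where "\<not> P dvd b" "\<not> P dvd z" "ind_class b = k" "[a = b + z ^ d] (mod P)"
    using cyc_matrix_obtain_add_power_d Suc.prems(2) by metis
  then show ?case
    using Suc.IH \<open>mpow d cyc_matrix n 0 k \<noteq> 0\<close> by (auto simp: is_sum_of_powers_Suc[of _ _ "Suc n"])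
qed

lemma s_d_eq_Least_mpow:
  assumes "0 < a" "\<not> P dvd a"
  shows "s_d d p a = (LEAST s. 1 \<le> s \<and> mpow d cyc_matrix (s - 1) 0 (ind_class a) \<noteq> 0)"
  unfolding s_d_eq_Least
proof (rule Least_eq_Least_if_dominated)
  show "is_sum_of_powers d p (nat a) a"
    using is_sum_of_powers_ones prime_p assms(1) by (metis less_le not_prime_1)
  show "\<exists>s\<le>k. 1 \<le> s \<and> mpow d cyc_matrix (s - 1) 0 (ind_class a) \<noteq> 0"
    if "is_sum_of_powers d p k a" for k
    using is_sum_of_powers_imp_mpow_nonzero[OF that assms(2)]
    by (metis Suc_leI diff_Suc_1 le_add1 plus_1_eq_Suc)
  show "is_sum_of_powers d p s a"
    if "1 \<le> s \<and> mpow d cyc_matrix (s - 1) 0 (ind_class a) \<noteq> 0" for s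
    using mpow_nonzero_imp_is_sum_of_powers[of "s - 1" a] that assms(2) by simp
qed

lemma ind_class_image: "ind_class ` {1..P - 1} = {..<d}"
proof
  show "ind_class ` {1..P - 1} \<subseteq> {..<d}"
    using ind_class_less by auto
  show "{..<d} \<subseteq> ind_class ` {1..P - 1}"
  proof
    fix \<alpha> assume "\<alpha> \<in> {..<d}"
    define a where "a = int w ^ \<alpha> mod P"
    have "[int w ^ \<alpha> = a] (mod P)" "\<not> P dvd a"
      using not_P_dvd_w by (auto simp: a_def cong_def dvd_mod_iff)
    then have "ind_class a = \<alpha>"
      using ind_class_eqI \<open>\<alpha> \<in> {..<d}\<close> by simp
    moreover have "0 \<le> a" "a < P"
      using prime_gt_0_nat[OF prime_p] by (simp_all add: a_def)
    then have "a \<in> {1..P - 1}"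
      using \<open>\<not> P dvd a\<close> by (cases "a = 0") auto
    ultimately show "\<alpha> \<in> ind_class ` {1..P - 1}"
      by blast
  qed
qed

lemma mpow_cyc_matrix_shift_iff:
  assumes "\<alpha> < d"
  shows "mpow d cyc_matrix n ((\<alpha> + theta) mod d) theta \<noteq> 0 \<longleftrightarrow> mpow d cyc_matrix n 0 \<alpha> \<noteq> 0"
proof -
  define \<sigma> where "\<sigma> a = (a + theta) mod d" for a
  have \<sigma>_less: "\<sigma> a < d" if "a < d" for a
    using d_pos by (simp add: \<sigma>_def)
  have \<sigma>_\<sigma>: "\<sigma> (\<sigma> a) = a" if "a < d" for a
  proof -
    have "\<sigma> (\<sigma> a) = (a + (theta + theta) mod d) mod d"
      by (simp add: \<sigma>_def mod_add_left_eq mod_add_right_eq add.assoc)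
    then show ?thesis
      using theta_add_theta_mod that by simp
  qed
  have anti: "cyc_matrix (\<sigma> j) (\<sigma> i) \<noteq> 0" if "i < d" "j < d" "cyc_matrix i j \<noteq> 0" for i j
    using cyc_matrix_reverse[OF that] by (simp add: \<sigma>_def)
  have reverse: "mpow d cyc_matrix n (\<sigma> j) (\<sigma> i) \<noteq> 0"
    if "i < d" "j < d" "mpow d cyc_matrix n i j \<noteq> 0" for i j
    by (rule mpow_nonzero_reverse[OF \<sigma>_less anti that])
  have "\<sigma> 0 = theta"
    using theta_less by (simp add: \<sigma>_def)
  show ?thesis
  proof
    assume "mpow d cyc_matrix n ((\<alpha> + theta) mod d) theta \<noteq> 0"
    then have "mpow d cyc_matrix n (\<sigma> \<alpha>) (\<sigma> 0) \<noteq> 0"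
      using theta_less by (simp add: \<sigma>_def)
    from reverse[OF \<sigma>_less \<sigma>_less this] show "mpow d cyc_matrix n 0 \<alpha> \<noteq> 0"
      using \<sigma>_\<sigma> assms d_pos by simp
  next
    assume "mpow d cyc_matrix n 0 \<alpha> \<noteq> 0"
    from reverse[OF d_pos assms this] show "mpow d cyc_matrix n ((\<alpha> + theta) mod d) theta \<noteq> 0"
      using \<open>\<sigma> 0 = theta\<close> by (simp add: \<sigma>_def)
  qed
qed

lemma g_d_eq_Max_Least_mpow:
  "g_d d p = Max ((\<lambda>\<alpha>. LEAST s. 1 \<le> s \<and> mpow d cyc_matrix (s - 1) ((\<alpha> + theta) mod d) theta \<noteq> 0) ` {..<d})"
proof -
  define D where "D \<alpha> = (LEAST s. 1 \<le> s \<and> mpow d cyc_matrix (s - 1) 0 \<alpha> \<noteq> 0)" for \<alpha>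
  have "s_d d p ` {1..P - 1} = (D \<circ> ind_class) ` {1..P - 1}"
    using s_d_eq_Least_mpow by (intro image_cong) (auto simp: D_def zdvd_not_zless)
  also have "\<dots> = D ` {..<d}"
    by (simp only: image_comp[symmetric] ind_class_image)
  also have "\<dots> = (\<lambda>\<alpha>. LEAST s. 1 \<le> s \<and> mpow d cyc_matrix (s - 1) ((\<alpha> + theta) mod d) theta \<noteq> 0) ` {..<d}"
    using mpow_cyc_matrix_shift_iff by (intro image_cong) (auto simp: D_def)
  finally show ?thesis
    by (simp add: g_d_def)
qed

end

theorem theorem2:
  fixes p d f w :: nat
  assumes "prime p" and "p > 2" and "d \<ge> 2" and "p - 1 = d * f"
    and "residue_primroot p w"
  defines "\<theta> \<equiv> (if even f then 0 else d div 2)"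
  defines "M \<equiv> (\<lambda>i j. if cyc p d f w i j = 0 then 0 else 1)"
  shows "g_d d p = Max ((\<lambda>\<alpha>. LEAST s. 1 \<le> s \<and> mpow d M (s - 1) ((\<alpha> + \<theta>) mod d) \<theta> \<noteq> 0) ` {..<d})"
proof -
  interpret cyclotomic p d f w
    using assms by unfold_locales auto
  show ?thesis
    using g_d_eq_Max_Least_mpow by (simp add: \<theta>_def M_def theta_def cyc_matrix_def)
qed

end
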